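(* Let $G$ be a finite bipartite graph with maximum degree $\Delta(G)$. Suppose that some set $E_0$ of edges of the Cartesian product $G \square K_2$ is precolored using colors from a set of at most $\Delta(G)+1$ colors, such that the distance between any two edges of $E_0$ is at least three. Then this precoloring is extendable, i.e. there is a proper edge coloring of $G \square K_2$ with $\chi'(G \square K_2)$ colors in which every edge of $E_0$ receives its prescribed color.
   Context: The Cartesian product $G \square H$ has vertex set $V(G)\times V(H)$, with $(u_1,u_2)$ adjacent to $(v_1,v_2)$ iff either $u_1=v_1$ and $u_2v_2 \in E(H)$, or $u_2=v_2$ and $u_1v_1\in E(G)$. The distance between vertices is the length of a shortest path between them, and the distance between edges $xy$ and $zw$ is $\min\{d(x,z),d(x,w),d(y,z),d(y,w)\}$. $\chi'$ denotes the chromatic index. *)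

theory Defs
  imports Main "HOL-Library.Extended_Nat"
begin

definition simple_graph :: "'v set \<Rightarrow> 'v set set \<Rightarrow> bool" where
  "simple_graph V E \<longleftrightarrow> finite V \<and> (\<forall>e\<in>E. e \<subseteq> V \<and> card e = 2)"

definition bipartite :: "'v set \<Rightarrow> 'v set set \<Rightarrow> bool" where
  "bipartite V E \<longleftrightarrow> (\<exists>A \<subseteq> V. \<forall>e\<in>E. card (e \<inter> A) = 1)"

definition degree :: "'v set set \<Rightarrow> 'v \<Rightarrow> nat" where
  "degree E v = card {e\<in>E. v \<in> e}"

definition max_degree :: "'v set \<Rightarrow> 'v set set \<Rightarrow> nat" where
  "max_degree V E = (if V = {} then 0 else Max (degree E ` V))"

definition cart_prod_V :: "'a set \<Rightarrow> 'b set \<Rightarrow> ('a \<times> 'b) set" where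
  "cart_prod_V V1 V2 = V1 \<times> V2"

definition cart_prod_E ::
  "'a set \<Rightarrow> 'a set set \<Rightarrow> 'b set \<Rightarrow> 'b set set \<Rightarrow> ('a \<times> 'b) set set" where
  "cart_prod_E V1 E1 V2 E2 =
     {{(u1, u2), (v1, v2)} | u1 u2 v1 v2.
        u1 \<in> V1 \<and> v1 \<in> V1 \<and> u2 \<in> V2 \<and> v2 \<in> V2 \<and>
        ((u1 = v1 \<and> {u2, v2} \<in> E2) \<or> (u2 = v2 \<and> {u1, v1} \<in> E1))}"

definition K2_V :: "bool set" where "K2_V = {False, True}"
definition K2_E :: "bool set set" where "K2_E = {{False, True}}"

definition has_walk :: "'v set set \<Rightarrow> 'v \<Rightarrow> 'v \<Rightarrow> nat \<Rightarrow> bool" where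
  "has_walk E u v n \<longleftrightarrow> (\<exists>xs. length xs = Suc n \<and> xs ! 0 = u \<and> xs ! n = v \<and>
      (\<forall>i<n. {xs ! i, xs ! Suc i} \<in> E))"

definition vdist :: "'v set set \<Rightarrow> 'v \<Rightarrow> 'v \<Rightarrow> enat" where
  "vdist E u v = (if \<exists>n. has_walk E u v n then enat (LEAST n. has_walk E u v n) else \<infinity>)"

definition edist :: "'v set set \<Rightarrow> 'v set \<Rightarrow> 'v set \<Rightarrow> enat" where
  "edist E e f = Min {vdist E x y | x y. x \<in> e \<and> y \<in> f}"

definition proper_edge_coloring :: "'v set set \<Rightarrow> ('v set \<Rightarrow> 'c) \<Rightarrow> bool" where
  "proper_edge_coloring E c \<longleftrightarrow>
     (\<forall>e\<in>E. \<forall>f\<in>E. e \<noteq> f \<and> e \<inter> f \<noteq> {} \<longrightarrow> c e \<noteq> c f)"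

definition chromatic_index :: "'v set set \<Rightarrow> nat" where
  "chromatic_index E = (LEAST k. \<exists>c :: 'v set \<Rightarrow> nat.
      proper_edge_coloring E c \<and> c ` E \<subseteq> {..<k})"

end

theory Submission
  imports Defs
begin

text \<open>Let \<Delta> be the maximum degree of G. A vertex of degree \<Delta> and its rung span a star of
  \<Delta> + 1 edges of G \<box> K2, so \<Delta> + 1 colours are needed; we construct a colouring with \<Delta> + 1
  colours extending the precolouring, which therefore realises the chromatic index.

  Project every precoloured edge to G: a layer edge to the edge of G it copies, a rung to its
  vertex. Distance at least three in G \<box> K2 makes these projections pairwise far apart in G
  (disjoint and joined by no edge), so every edge of G meets at most one of them and has at
  most one forbidden colour. Since bipartite graphs are \<Delta>-edge-choosable (Galvin), the
  remaining edges of G can be coloured from their lists of at least \<Delta> allowed colours; both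
  layers copy this colouring, and every rung gets its prescribed colour or one of the colours
  missing at its vertex, of which there is one since only \<Delta> colours meet it.

  Galvin's theorem is proved along the usual route: Koenig's theorem, via Kempe chains, gives a
  proper \<Delta>-edge-colouring; it orients the line graph, stable matchings (Gale--Shapley) are
  kernels of this orientation, and colouring kernels one colour at a time yields the list
  colouring.\<close>

section \<open>Edge colourings of bipartite multigraphs\<close>

text \<open>A bipartite multigraph is given by its set B of edges and two endpoint maps: the edge g
  joins the left vertex l g to the right vertex r g.\<close>

definition bip_proper :: "'e set \<Rightarrow> ('e \<Rightarrow> 'a) \<Rightarrow> ('e \<Rightarrow> 'b) \<Rightarrow> ('e \<Rightarrow> 'c) \<Rightarrow> bool" where
  "bip_proper B l r f \<longleftrightarrow> (\<forall>g\<in>B. \<forall>h\<in>B. g \<noteq> h \<and> (l g = l h \<or> r g = r h) \<longrightarrow> f g \<noteq> f h)"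

lemma bip_proper_eqD:
  "bip_proper B l r f \<Longrightarrow> g \<in> B \<Longrightarrow> h \<in> B \<Longrightarrow> l g = l h \<or> r g = r h \<Longrightarrow> f g = f h \<Longrightarrow> g = h"
  unfolding bip_proper_def by blast

lemma bip_proper_subset: "bip_proper B l r f \<Longrightarrow> B' \<subseteq> B \<Longrightarrow> bip_proper B' l r f"
  unfolding bip_proper_def by blast

lemma ex_notin_of_card_less:
  assumes "finite X" "card X < card S"
  shows "\<exists>a\<in>S. a \<notin> X"
proof (rule ccontr)
  assume "\<not> ?thesis"
  then have "card S \<le> card X" using assms(1) by (intro card_mono) auto
  then show False using assms(2) by simp
qed

lemma finite_superset_with_card:
  fixes C :: "'a set"
  assumes "finite C" "card C \<le> n" "infinite (UNIV :: 'a set)"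
  obtains S where "C \<subseteq> S" "finite S" "card S = n"
proof -
  have "infinite (- C)" using assms(1,3) finite_compl by blast
  then obtain T where T: "finite T" "card T = n - card C" "T \<subseteq> - C"
    using infinite_arbitrarily_large by blast
  then have "card (C \<union> T) = n" using assms(1,2) by (subst card_Un_disjoint) auto
  then show thesis using that[of "C \<union> T"] assms(1) T(1) by blast
qed

inductive_set kempe_chain ::
  "'e set \<Rightarrow> ('e \<Rightarrow> 'a) \<Rightarrow> ('e \<Rightarrow> 'b) \<Rightarrow> ('e \<Rightarrow> 'c) \<Rightarrow> 'c \<Rightarrow> 'c \<Rightarrow> 'b \<Rightarrow> ('a + 'b) set"
  for B l r f a b v where
  start: "Inr v \<in> kempe_chain B l r f a b v"
| step_left: "Inr (r g) \<in> kempe_chain B l r f a b v \<Longrightarrow> g \<in> B \<Longrightarrow> f g = a \<Longrightarrow>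
    Inl (l g) \<in> kempe_chain B l r f a b v"
| step_right: "Inl (l g) \<in> kempe_chain B l r f a b v \<Longrightarrow> g \<in> B \<Longrightarrow> f g = b \<Longrightarrow>
    Inr (r g) \<in> kempe_chain B l r f a b v"

lemma kempe_chain_closed:
  assumes pr: "bip_proper B l r f" and g: "g \<in> B" "f g = a \<or> f g = b"
    and v: "\<forall>h\<in>B. r h = v \<longrightarrow> f h \<noteq> b"
  shows "Inl (l g) \<in> kempe_chain B l r f a b v \<longleftrightarrow> Inr (r g) \<in> kempe_chain B l r f a b v"
proof
  assume l: "Inl (l g) \<in> kempe_chain B l r f a b v"
  show "Inr (r g) \<in> kempe_chain B l r f a b v"
  proof (cases "f g = b")
    case True
    then show ?thesis using l g by (auto intro: kempe_chain.step_right)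
  next
    case False
    from l obtain h where "h \<in> B" "l h = l g" "f h = a" "Inr (r h) \<in> kempe_chain B l r f a b v"
      by cases auto
    moreover have "h = g" if "h \<in> B" "l h = l g" "f h = a"
      using pr g False that unfolding bip_proper_def by metis
    ultimately show ?thesis by simp
  qed
next
  assume rg: "Inr (r g) \<in> kempe_chain B l r f a b v"
  show "Inl (l g) \<in> kempe_chain B l r f a b v"
  proof (cases "f g = a")
    case True
    then show ?thesis using rg g by (auto intro: kempe_chain.step_left)
  next
    case False
    then have "r g \<noteq> v" using v g by auto
    with rg obtain h where "h \<in> B" "r h = r g" "f h = b" "Inl (l h) \<in> kempe_chain B l r f a b v"
      by cases auto
    moreover have "h = g" if "h \<in> B" "r h = r g" "f h = b"
      using pr g False that unfolding bip_proper_def by metis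
    ultimately show ?thesis by simp
  qed
qed

definition swap_colors :: "'c \<Rightarrow> 'c \<Rightarrow> 'c \<Rightarrow> 'c" where
  "swap_colors a b c = (if c = a then b else if c = b then a else c)"

lemma swap_colors_inj: "swap_colors a b c = swap_colors a b d \<longleftrightarrow> c = d"
  unfolding swap_colors_def by auto

text \<open>Swapping a and b on the Kempe chain of v frees a at v. The chain enters left vertices
  only through edges of colour a, so it avoids u, where a stays free.\<close>

lemma kempe_swap:
  assumes pr: "bip_proper B l r f" and ab: "a \<in> S" "b \<in> S" and fS: "\<forall>g\<in>B. f g \<in> S"
    and v: "\<forall>g\<in>B. r g = v \<longrightarrow> f g \<noteq> b"
    and u: "\<forall>g\<in>B. l g = u \<longrightarrow> f g \<noteq> a"
  obtains f' where "bip_proper B l r f'" "\<forall>g\<in>B. f' g \<in> S"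
    "\<forall>g\<in>B. l g = u \<longrightarrow> f' g \<noteq> a" "\<forall>g\<in>B. r g = v \<longrightarrow> f' g \<noteq> a"
proof
  define K where "K = kempe_chain B l r f a b v"
  define f' where "f' g = (if Inr (r g) \<in> K then swap_colors a b (f g) else f g)" for g
  have closed: "Inl (l g) \<in> K \<longleftrightarrow> Inr (r g) \<in> K" if "g \<in> B" "f g = a \<or> f g = b" for g
    using kempe_chain_closed[OF pr that v] unfolding K_def .
  have f'_ab: "f' g = a \<or> f' g = b \<longleftrightarrow> f g = a \<or> f g = b" for g
    unfolding f'_def swap_colors_def by auto
  have f'_other: "f' g = f g" if "f g \<noteq> a" "f g \<noteq> b" for g
    using that unfolding f'_def swap_colors_def by auto
  show "bip_proper B l r f'"
    unfolding bip_proper_def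
  proof (intro ballI impI)
    fix g h assume g: "g \<in> B" and h: "h \<in> B" and gh: "g \<noteq> h \<and> (l g = l h \<or> r g = r h)"
    have fgh: "f g \<noteq> f h" using pr g h gh unfolding bip_proper_def by blast
    consider "f g = a \<or> f g = b" "f h = a \<or> f h = b" | "\<not> (f g = a \<or> f g = b) \<or> \<not> (f h = a \<or> f h = b)"
      by blast
    then show "f' g \<noteq> f' h"
    proof cases
      case 1
      then have "Inr (r g) \<in> K \<longleftrightarrow> Inr (r h) \<in> K"
        using gh closed[OF g] closed[OF h] by metis
      then show ?thesis using fgh swap_colors_inj unfolding f'_def by metis
    next
      case 2
      then show ?thesis using fgh f'_ab f'_other by metis
    qed
  qed
  show "\<forall>g\<in>B. f' g \<in> S" using fS ab unfolding f'_def swap_colors_def by auto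
  show "\<forall>g\<in>B. l g = u \<longrightarrow> f' g \<noteq> a"
  proof (intro ballI impI notI)
    fix g assume g: "g \<in> B" "l g = u" and f'g: "f' g = a"
    then have "Inr (r g) \<in> K" "f g = b" using u unfolding f'_def swap_colors_def by (auto split: if_splits)
    then have "Inl u \<in> K" using closed g by auto
    then show False using u unfolding K_def by cases auto
  qed
  show "\<forall>g\<in>B. r g = v \<longrightarrow> f' g \<noteq> a"
    using v kempe_chain.start[of v B l r f a b] unfolding f'_def K_def swap_colors_def by auto
qed

lemma bip_proper_insert:
  assumes "bip_proper B l r f" "e \<notin> B"
    and "\<forall>g\<in>B. l g = l e \<longrightarrow> f g \<noteq> c" "\<forall>g\<in>B. r g = r e \<longrightarrow> f g \<noteq> c"
  shows "bip_proper (insert e B) l r (f(e := c))"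
  unfolding bip_proper_def
proof (intro ballI impI)
  fix g h assume "g \<in> insert e B" "h \<in> insert e B" "g \<noteq> h \<and> (l g = l h \<or> r g = r h)"
  then show "(f(e := c)) g \<noteq> (f(e := c)) h"
    using assms unfolding bip_proper_def by (cases "g = e"; cases "h = e") auto
qed

lemma card_Collect_less_of_insert:
  assumes "finite B" "e \<notin> B" "card {g\<in>insert e B. P g} \<le> k" "P e"
  shows "card {g\<in>B. P g} < k"
proof -
  have "{g\<in>insert e B. P g} = insert e {g\<in>B. P g}" using assms(4) by auto
  then show ?thesis using assms by simp
qed

theorem koenig_edge_coloring:
  assumes "finite B"
    and "\<forall>x. card {g\<in>B. l g = x} \<le> card S" "\<forall>y. card {g\<in>B. r g = y} \<le> card S"
  shows "\<exists>f. bip_proper B l r f \<and> (\<forall>g\<in>B. f g \<in> S)"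
  using assms
proof (induction B rule: finite_induct)
  case empty
  then show ?case by (auto simp: bip_proper_def)
next
  case (insert e B)
  have le: "card {g\<in>B. P g} \<le> card {g\<in>insert e B. P g}" for P
    using insert.hyps by (intro card_mono) auto
  have "card {g\<in>B. l g = x} \<le> card S" "card {g\<in>B. r g = y} \<le> card S" for x y
    using order_trans[OF le insert.prems(1)[rule_format]]
      order_trans[OF le insert.prems(2)[rule_format]] .
  then obtain f where f: "bip_proper B l r f" "\<forall>g\<in>B. f g \<in> S"
    using insert.IH by blast
  have "card (f ` {g\<in>B. l g = l e}) \<le> card {g\<in>B. l g = l e}"
    using insert.hyps(1) by (simp add: card_image_le)
  also have "\<dots> < card S"
    using insert.prems(1) by (intro card_Collect_less_of_insert) (use insert.hyps in simp_all)
  finally obtain a where a: "a \<in> S" "\<forall>g\<in>B. l g = l e \<longrightarrow> f g \<noteq> a"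
    using ex_notin_of_card_less[of "f ` {g\<in>B. l g = l e}" S] insert.hyps(1) by auto
  have "card (f ` {g\<in>B. r g = r e}) \<le> card {g\<in>B. r g = r e}"
    using insert.hyps(1) by (simp add: card_image_le)
  also have "\<dots> < card S"
    using insert.prems(2) by (intro card_Collect_less_of_insert) (use insert.hyps in simp_all)
  finally obtain b where b: "b \<in> S" "\<forall>g\<in>B. r g = r e \<longrightarrow> f g \<noteq> b"
    using ex_notin_of_card_less[of "f ` {g\<in>B. r g = r e}" S] insert.hyps(1) by auto
  obtain f' where f': "bip_proper B l r f'" "\<forall>g\<in>B. f' g \<in> S"
    "\<forall>g\<in>B. l g = l e \<longrightarrow> f' g \<noteq> a" "\<forall>g\<in>B. r g = r e \<longrightarrow> f' g \<noteq> a"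
    using kempe_swap[OF f(1) a(1) b(1) f(2) b(2) a(2)] .
  have "bip_proper (insert e B) l r (f'(e := a))"
    using bip_proper_insert[OF f'(1) insert.hyps(2) f'(3,4)] .
  moreover have "\<forall>g\<in>insert e B. (f'(e := a)) g \<in> S" using f'(2) a(1) by simp
  ultimately show ?case by blast
qed

section \<open>Galvin's list edge colouring theorem\<close>

definition beats :: "('e \<Rightarrow> 'a) \<Rightarrow> ('e \<Rightarrow> 'b) \<Rightarrow> ('e \<Rightarrow> nat) \<Rightarrow> 'e \<Rightarrow> 'e \<Rightarrow> bool" where
  "beats l r f h g \<longleftrightarrow> (l g = l h \<and> f g < f h) \<or> (r g = r h \<and> f h < f g)"

definition bip_matching :: "'e set \<Rightarrow> ('e \<Rightarrow> 'a) \<Rightarrow> ('e \<Rightarrow> 'b) \<Rightarrow> bool" where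
  "bip_matching K l r \<longleftrightarrow> (\<forall>g\<in>K. \<forall>h\<in>K. g \<noteq> h \<longrightarrow> l g \<noteq> l h \<and> r g \<noteq> r h)"

definition left_best :: "'e set \<Rightarrow> ('e \<Rightarrow> 'a) \<Rightarrow> ('e \<Rightarrow> nat) \<Rightarrow> 'e \<Rightarrow> bool" where
  "left_best D l f h \<longleftrightarrow> h \<in> D \<and> (\<forall>h'\<in>D. l h' = l h \<longrightarrow> f h' \<le> f h)"

lemma left_best_exists:
  assumes "finite D" "g \<in> D"
  obtains h where "left_best D l f h" "l h = l g" "f g \<le> f h"
proof -
  define X where "X = {h\<in>D. l h = l g}"
  have X: "finite X" "g \<in> X" using assms unfolding X_def by auto
  then have "Max (f ` X) \<in> f ` X" by (intro Max_in) auto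
  then obtain h where h: "h \<in> X" "f h = Max (f ` X)" by auto
  have "\<forall>h'\<in>X. f h' \<le> f h" using X h(2) by simp
  then show thesis using that h(1) X(2) unfolding X_def left_best_def by auto
qed

text \<open>Gale--Shapley in disguise: every left vertex proposes along its best remaining edge,
  and among proposals meeting at a right vertex only the best survives. The invariant says
  that each discarded edge lost to a current proposal at its right endpoint.\<close>

lemma left_best_remove:
  assumes h: "left_best D l f h1" "left_best D l f h2" "h1 \<noteq> h2" "r h1 = r h2" "f h1 < f h2"
    and inv: "\<forall>g\<in>D0 - D. \<exists>h. left_best D l f h \<and> r g = r h \<and> f h < f g"
  shows "\<forall>g\<in>D0 - (D - {h2}). \<exists>h. left_best (D - {h2}) l f h \<and> r g = r h \<and> f h < f g"
proof
  have best: "left_best (D - {h2}) l f h" if "left_best D l f h" "h \<noteq> h2" for h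
    using that unfolding left_best_def by auto
  fix g assume g: "g \<in> D0 - (D - {h2})"
  show "\<exists>h. left_best (D - {h2}) l f h \<and> r g = r h \<and> f h < f g"
  proof (cases "g = h2")
    case True
    then show ?thesis using best[OF h(1,3)] h(4,5) by auto
  next
    case False
    then obtain h where hg: "left_best D l f h" "r g = r h" "f h < f g" using inv g by auto
    show ?thesis
    proof (cases "h = h2")
      case True
      then show ?thesis using best[OF h(1,3)] h(4,5) hg by (intro exI[of _ h1]) auto
    next
      case False
      then show ?thesis using best hg by blast
    qed
  qed
qed

lemma left_best_stable:
  assumes fin: "finite D" and D: "D \<subseteq> D0" and pr: "bip_proper D0 l r f"
    and inv: "\<forall>g\<in>D0 - D. \<exists>h. left_best D l f h \<and> r g = r h \<and> f h < f g"
    and no_clash: "\<nexists>h1 h2. left_best D l f h1 \<and> left_best D l f h2 \<and> h1 \<noteq> h2 \<and>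
      r h1 = r h2 \<and> f h1 < f h2"
  defines "K \<equiv> {h. left_best D l f h}"
  shows "K \<subseteq> D0" "bip_matching K l r" "\<forall>g\<in>D0 - K. \<exists>h\<in>K. beats l r f h g"
proof -
  show "K \<subseteq> D0" using D unfolding K_def left_best_def by auto
  show "bip_matching K l r"
    unfolding bip_matching_def
  proof (intro ballI impI conjI notI)
    fix g h assume g: "g \<in> K" and h: "h \<in> K" and gh: "g \<noteq> h"
    then have best: "left_best D l f g" "left_best D l f h" unfolding K_def by auto
    then have "g \<in> D0" "h \<in> D0" using D unfolding left_best_def by auto
    then have fgh: "f g \<noteq> f h" if "l g = l h \<or> r g = r h"
      using pr gh that unfolding bip_proper_def by blast
    show False if "l g = l h"
      using best fgh that unfolding left_best_def by (metis le_antisym)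
    show False if "r g = r h"
      using no_clash best gh fgh that by (metis linorder_neqE_nat)
  qed
  show "\<forall>g\<in>D0 - K. \<exists>h\<in>K. beats l r f h g"
  proof
    fix g assume g: "g \<in> D0 - K"
    show "\<exists>h\<in>K. beats l r f h g"
    proof (cases "g \<in> D")
      case False
      then show ?thesis using inv g unfolding K_def beats_def by auto
    next
      case True
      then obtain h' where "h' \<in> D" "l h' = l g" "f g < f h'"
        using g unfolding K_def left_best_def by (auto simp: not_le)
      moreover obtain h where "left_best D l f h" "l h = l h'" "f h' \<le> f h"
        using left_best_exists[OF fin \<open>h' \<in> D\<close>] .
      ultimately show ?thesis unfolding K_def beats_def by auto
    qed
  qed
qed

lemma stable_matching_exists:
  assumes "finite D0" "bip_proper D0 l r f"
  shows "\<exists>K\<subseteq>D0. bip_matching K l r \<and> (\<forall>g\<in>D0 - K. \<exists>h\<in>K. beats l r f h g)"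
proof -
  have "\<exists>K\<subseteq>D0. bip_matching K l r \<and> (\<forall>g\<in>D0 - K. \<exists>h\<in>K. beats l r f h g)"
    if "finite D" "D \<subseteq> D0" "\<forall>g\<in>D0 - D. \<exists>h. left_best D l f h \<and> r g = r h \<and> f h < f g" for D
    using that
  proof (induction D rule: finite_psubset_induct)
    case (psubset D)
    show ?case
    proof (cases "\<exists>h1 h2. left_best D l f h1 \<and> left_best D l f h2 \<and> h1 \<noteq> h2 \<and>
        r h1 = r h2 \<and> f h1 < f h2")
      case True
      then obtain h1 h2 where h: "left_best D l f h1" "left_best D l f h2" "h1 \<noteq> h2"
        "r h1 = r h2" "f h1 < f h2" by blast
      have "D - {h2} \<subset> D" using h(2) unfolding left_best_def by auto
      then show ?thesis
        using psubset.IH left_best_remove[OF h psubset.prems(2)] psubset.prems(1) by blast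
    next
      case False
      then show ?thesis
        using left_best_stable[OF psubset.hyps psubset.prems(1) assms(2) psubset.prems(2)] by blast
    qed
  qed
  then show ?thesis using assms(1) by blast
qed

lemma card_beaters_Diff_kernel:
  assumes "finite B" "K \<subseteq> B" "g \<in> B - K" "finite (L g)"
    and "card {h\<in>B. beats l r f h g} < card (L g)"
    and "c \<in> L g \<Longrightarrow> \<exists>h\<in>K. beats l r f h g"
  shows "card {h\<in>B - K. beats l r f h g} < card (L g - {c})"
proof (cases "c \<in> L g")
  case True
  then obtain h where h: "h \<in> K" "beats l r f h g" using assms(6) by blast
  have "card {h\<in>B - K. beats l r f h g} < card {h\<in>B. beats l r f h g}"
    using h assms(1,2) by (intro psubset_card_mono) auto
  then show ?thesis using True assms(4,5) by simp
next
  case False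
  have "card {h\<in>B - K. beats l r f h g} \<le> card {h\<in>B. beats l r f h g}"
    using assms(1) by (intro card_mono) auto
  then show ?thesis using False assms(5) by simp
qed

lemma bip_proper_extend_matching:
  assumes pr: "bip_proper (B - K) l r \<delta>" and K: "bip_matching K l r"
    and c: "\<forall>g\<in>B - K. \<delta> g \<noteq> c"
  shows "bip_proper B l r (\<lambda>g. if g \<in> K then c else \<delta> g)"
  unfolding bip_proper_def
proof (intro ballI impI)
  fix g h assume g: "g \<in> B" and h: "h \<in> B" and gh: "g \<noteq> h \<and> (l g = l h \<or> r g = r h)"
  consider "g \<in> K" "h \<in> K" | "g \<in> K \<longleftrightarrow> h \<notin> K" | "g \<notin> K" "h \<notin> K" by blast
  then show "(if g \<in> K then c else \<delta> g) \<noteq> (if h \<in> K then c else \<delta> h)"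
  proof cases
    case 1
    then show ?thesis using K gh unfolding bip_matching_def by blast
  next
    case 2
    then show ?thesis using c g h by auto
  next
    case 3
    then show ?thesis using pr g h gh unfolding bip_proper_def by simp
  qed
qed

text \<open>Galvin's kernel argument for the orientation beats of the line graph: a stable matching
  among the edges whose list contains c can be coloured c, and this lowers, for every other such
  edge, both its list and the number of edges beating it.\<close>

lemma list_coloring_of_orientation:
  assumes "finite B" "bip_proper B l r f"
    and "\<forall>g\<in>B. finite (L g) \<and> card {h\<in>B. beats l r f h g} < card (L g)"
  shows "\<exists>\<delta>. (\<forall>g\<in>B. \<delta> g \<in> L g) \<and> bip_proper B l r \<delta>"
  using assms
proof (induction B arbitrary: L rule: finite_psubset_induct)
  case (psubset B)
  show ?case
  proof (cases "B = {}")
    case True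
    then show ?thesis by (auto simp: bip_proper_def)
  next
    case False
    then obtain g0 where g0: "g0 \<in> B" by auto
    then have "card (L g0) \<noteq> 0" using psubset.prems(2) by (metis less_zeroE)
    then obtain c where c: "c \<in> L g0" by fastforce
    define D where "D = {g\<in>B. c \<in> L g}"
    have D: "finite D" "D \<subseteq> B" "g0 \<in> D" using psubset.hyps g0 c unfolding D_def by auto
    obtain K where K: "K \<subseteq> D" "bip_matching K l r" "\<forall>g\<in>D - K. \<exists>h\<in>K. beats l r f h g"
      using stable_matching_exists[OF D(1) bip_proper_subset[OF psubset.prems(1) D(2)]] by blast
    have KB: "K \<subseteq> B" using K(1) D(2) by blast
    have "K \<noteq> {}" using K(3) D(3) by auto
    then have sub: "B - K \<subset> B" using KB by auto
    have "\<forall>g\<in>B - K. finite (L g - {c}) \<and> card {h\<in>B - K. beats l r f h g} < card (L g - {c})"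
    proof
      fix g assume g: "g \<in> B - K"
      have beaten: "\<exists>h\<in>K. beats l r f h g" if "c \<in> L g"
        using K(3) g that unfolding D_def by blast
      have fin: "finite (L g)" and lt: "card {h\<in>B. beats l r f h g} < card (L g)"
        using psubset.prems(2) g by auto
      show "finite (L g - {c}) \<and> card {h\<in>B - K. beats l r f h g} < card (L g - {c})"
        using card_beaters_Diff_kernel[where L = L, OF psubset.hyps KB g fin lt beaten] fin by simp
    qed
    then obtain \<delta> where \<delta>: "\<forall>g\<in>B - K. \<delta> g \<in> L g - {c}" "bip_proper (B - K) l r \<delta>"
      using psubset.IH[OF sub, of "\<lambda>g. L g - {c}"] bip_proper_subset[OF psubset.prems(1)] by blast
    have "\<forall>g\<in>B. (if g \<in> K then c else \<delta> g) \<in> L g" using \<delta>(1) K(1) unfolding D_def by auto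
    moreover have "bip_proper B l r (\<lambda>g. if g \<in> K then c else \<delta> g)"
      using bip_proper_extend_matching[OF \<delta>(2) K(2)] \<delta>(1) by blast
    ultimately show ?thesis by (intro exI[of _ "\<lambda>g. if g \<in> K then c else \<delta> g"]) simp
  qed
qed

lemma card_beaters_less:
  assumes "finite B" "bip_proper B l r f" "\<forall>h\<in>B. f h < k" "g \<in> B"
  shows "card {h\<in>B. beats l r f h g} < k"
proof -
  define Left where "Left = {h\<in>B. l g = l h \<and> f g < f h}"
  define Right where "Right = {h\<in>B. r g = r h \<and> f h < f g}"
  have "inj_on f Left"
  proof (rule inj_onI)
    fix x y assume "x \<in> Left" "y \<in> Left" "f x = f y"
    then show "x = y" using bip_proper_eqD[OF assms(2)] unfolding Left_def by auto
  qed
  moreover have "f ` Left \<subseteq> {f g<..<k}" using assms(3) unfolding Left_def by auto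
  ultimately have left: "card Left \<le> k - Suc (f g)"
    using card_inj_on_le[of f Left "{f g<..<k}"] by simp
  have "inj_on f Right"
  proof (rule inj_onI)
    fix x y assume "x \<in> Right" "y \<in> Right" "f x = f y"
    then show "x = y" using bip_proper_eqD[OF assms(2)] unfolding Right_def by auto
  qed
  moreover have "f ` Right \<subseteq> {..<f g}" unfolding Right_def by auto
  ultimately have right: "card Right \<le> f g"
    using card_inj_on_le[of f Right "{..<f g}"] by simp
  have "{h\<in>B. beats l r f h g} = Left \<union> Right"
    unfolding Left_def Right_def beats_def by auto
  then have "card {h\<in>B. beats l r f h g} \<le> k - Suc (f g) + f g"
    using card_Un_le[of Left Right] left right by simp
  moreover have "f g < k" using assms(3,4) by blast
  ultimately show ?thesis by linarith
qed

theorem galvin_list_edge_coloring: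
  assumes "finite B"
    and "\<forall>x. card {g\<in>B. l g = x} \<le> k" "\<forall>y. card {g\<in>B. r g = y} \<le> k"
    and "\<forall>g\<in>B. finite (L g) \<and> k \<le> card (L g)"
  shows "\<exists>\<delta>. (\<forall>g\<in>B. \<delta> g \<in> L g) \<and> bip_proper B l r \<delta>"
proof -
  obtain f :: "_ \<Rightarrow> nat" where f: "bip_proper B l r f" "\<forall>g\<in>B. f g \<in> {..<k}"
    using koenig_edge_coloring[of B l "{..<k}" r] assms(1-3) by auto
  have "card {h\<in>B. beats l r f h g} < card (L g)" if "g \<in> B" for g
  proof -
    have "card {h\<in>B. beats l r f h g} < k"
      using card_beaters_less[OF assms(1) f(1) _ that] f(2) by simp
    then show ?thesis using assms(4) that by (simp add: less_le_trans)
  qed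
  then have "\<forall>g\<in>B. finite (L g) \<and> card {h\<in>B. beats l r f h g} < card (L g)"
    using assms(4) by blast
  then show ?thesis using list_coloring_of_orientation[OF assms(1) f(1)] by blast
qed

lemma simple_graph_edgeE:
  assumes "simple_graph V E" "g \<in> E"
  obtains u v where "g = {u, v}" "u \<noteq> v" "u \<in> V" "v \<in> V"
  using assms unfolding simple_graph_def by (metis card_2_iff insert_subset)

lemma simple_graph_finite_edges: "simple_graph V E \<Longrightarrow> finite E"
  unfolding simple_graph_def by (meson Pow_iff finite_Pow_iff finite_subset subsetI)

lemma degree_le_max_degree:
  assumes "simple_graph V E"
  shows "degree E v \<le> max_degree V E"
proof (cases "v \<in> V")
  case True
  then show ?thesis using assms unfolding simple_graph_def max_degree_def by auto
next
  case False
  then have "{g\<in>E. v \<in> g} = {}" using assms unfolding simple_graph_def by auto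
  then show ?thesis unfolding degree_def by (simp only: card.empty le0)
qed

lemma max_degree_attained:
  assumes "simple_graph V E" "V \<noteq> {}"
  obtains v where "v \<in> V" "degree E v = max_degree V E"
proof -
  have "Max (degree E ` V) \<in> degree E ` V"
    using assms unfolding simple_graph_def by (intro Max_in) auto
  then obtain v where "v \<in> V" "degree E v = Max (degree E ` V)" by auto
  then show thesis using that assms(2) unfolding max_degree_def by simp
qed

lemma bipartite_edge_ends:
  assumes "simple_graph V E" "bipartite V E"
  obtains l r where "\<forall>g\<in>E. g = {l g, r g}"
    "\<forall>g\<in>E. \<forall>h\<in>E. g \<inter> h \<noteq> {} \<longrightarrow> l g = l h \<or> r g = r h"
proof -
  obtain A where A: "\<forall>g\<in>E. card (g \<inter> A) = 1" using assms(2) unfolding bipartite_def by blast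
  have ends: "\<exists>x y. g = {x, y} \<and> x \<in> A \<and> y \<notin> A" if g: "g \<in> E" for g
  proof -
    obtain u v where uv: "g = {u, v}" "u \<noteq> v" by (rule simple_graph_edgeE[OF assms(1) g])
    have "card ({u, v} \<inter> A) = 1" using A g uv(1) by blast
    then have "(u \<in> A \<and> v \<notin> A) \<or> (v \<in> A \<and> u \<notin> A)"
      using uv(2) by (cases "u \<in> A"; cases "v \<in> A") auto
    then show ?thesis using uv(1) by (metis insert_commute)
  qed
  define l where "l g = (THE x. x \<in> g \<and> x \<in> A)" for g :: "'a set"
  define r where "r g = (THE y. y \<in> g \<and> y \<notin> A)" for g :: "'a set"
  have lr: "g = {l g, r g} \<and> l g \<in> A \<and> r g \<notin> A" if g: "g \<in> E" for g
  proof -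
    obtain x y where xy: "g = {x, y}" "x \<in> A" "y \<notin> A" using ends[OF g] by blast
    have "l g = x" unfolding l_def using xy by (intro the_equality) auto
    moreover have "r g = y" unfolding r_def using xy by (intro the_equality) auto
    ultimately show ?thesis using xy by simp
  qed
  show thesis
  proof (rule that)
    show "\<forall>g\<in>E. g = {l g, r g}" using lr by blast
    show "\<forall>g\<in>E. \<forall>h\<in>E. g \<inter> h \<noteq> {} \<longrightarrow> l g = l h \<or> r g = r h"
    proof (intro ballI impI)
      fix g h assume "g \<in> E" "h \<in> E" "g \<inter> h \<noteq> {}"
      then obtain z where "z \<in> g" "z \<in> h" by blast
      with lr[OF \<open>g \<in> E\<close>] lr[OF \<open>h \<in> E\<close>] show "l g = l h \<or> r g = r h"
        by (cases "z \<in> A") (metis insertE singletonD)+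
    qed
  qed
qed

theorem bipartite_list_edge_coloring:
  assumes G: "simple_graph V E" "bipartite V E" and deg: "\<forall>v. degree E v \<le> k"
    and B: "B \<subseteq> E" and L: "\<forall>g\<in>B. finite (L g) \<and> k \<le> card (L g)"
  shows "\<exists>\<delta>. (\<forall>g\<in>B. \<delta> g \<in> L g) \<and> proper_edge_coloring B \<delta>"
proof -
  obtain l r where lr: "\<forall>g\<in>E. g = {l g, r g}"
    "\<forall>g\<in>E. \<forall>h\<in>E. g \<inter> h \<noteq> {} \<longrightarrow> l g = l h \<or> r g = r h"
    using bipartite_edge_ends[OF G] by blast
  have finB: "finite B" using simple_graph_finite_edges[OF G(1)] B finite_subset by blast
  have finE: "finite E" using simple_graph_finite_edges[OF G(1)] .
  have ends: "l g \<in> g" "r g \<in> g" if "g \<in> E" for g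
    using lr(1) that by (metis insertI1, metis insertI1 insert_commute)
  have "card {g\<in>B. l g = x} \<le> degree E x" "card {g\<in>B. r g = y} \<le> degree E y" for x y
    unfolding degree_def using finE B ends by (auto intro!: card_mono)
  then have "card {g\<in>B. l g = x} \<le> k" "card {g\<in>B. r g = y} \<le> k" for x y
    using deg order_trans by blast+
  then obtain \<delta> where \<delta>: "\<forall>g\<in>B. \<delta> g \<in> L g" "bip_proper B l r \<delta>"
    using galvin_list_edge_coloring[OF finB _ _ L] by blast
  have "proper_edge_coloring B \<delta>"
    unfolding proper_edge_coloring_def
  proof (intro ballI impI notI)
    fix g h assume g: "g \<in> B" and h: "h \<in> B" and gh: "g \<noteq> h \<and> g \<inter> h \<noteq> {}"
      and "\<delta> g = \<delta> h"
    moreover have "l g = l h \<or> r g = r h" using lr(2) g h gh B by blast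
    ultimately show False using bip_proper_eqD[OF \<delta>(2) g h] by blast
  qed
  then show ?thesis using \<delta>(1) by blast
qed

section \<open>The prism G \<box> K2\<close>

lemma cart_prod_K2_E_iff:
  assumes "simple_graph V E"
  shows "e \<in> cart_prod_E V E K2_V K2_E \<longleftrightarrow>
    (\<exists>u v i. {u, v} \<in> E \<and> e = {(u, i), (v, i)}) \<or> (\<exists>v\<in>V. e = {(v, False), (v, True)})"
proof
  assume "e \<in> cart_prod_E V E K2_V K2_E"
  then obtain u1 u2 v1 v2 where e: "e = {(u1, u2), (v1, v2)}" "u1 \<in> V"
    "(u1 = v1 \<and> {u2, v2} \<in> K2_E) \<or> (u2 = v2 \<and> {u1, v1} \<in> E)"
    unfolding cart_prod_E_def by blast
  show "(\<exists>u v i. {u, v} \<in> E \<and> e = {(u, i), (v, i)}) \<or> (\<exists>v\<in>V. e = {(v, False), (v, True)})"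
  proof (cases "u1 = v1 \<and> {u2, v2} \<in> K2_E")
    case True
    then have "{u2, v2} = {False, True}" unfolding K2_E_def by simp
    then have "e = {(u1, False), (u1, True)}" using e(1) True by (auto simp: doubleton_eq_iff)
    then show ?thesis using e(2) by blast
  next
    case False
    then show ?thesis using e(1,3) by blast
  qed
next
  assume "(\<exists>u v i. {u, v} \<in> E \<and> e = {(u, i), (v, i)}) \<or> (\<exists>v\<in>V. e = {(v, False), (v, True)})"
  then show "e \<in> cart_prod_E V E K2_V K2_E"
  proof
    assume "\<exists>u v i. {u, v} \<in> E \<and> e = {(u, i), (v, i)}"
    then obtain u v i where uv: "{u, v} \<in> E" "e = {(u, i), (v, i)}" by blast
    moreover have "u \<in> V" "v \<in> V" using assms uv(1) unfolding simple_graph_def by auto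
    ultimately show ?thesis unfolding cart_prod_E_def K2_V_def by blast
  next
    assume "\<exists>v\<in>V. e = {(v, False), (v, True)}"
    then show ?thesis unfolding cart_prod_E_def K2_V_def K2_E_def by blast
  qed
qed

lemma cart_prod_K2_E_cases [consumes 2]:
  assumes "simple_graph V E" "e \<in> cart_prod_E V E K2_V K2_E"
  obtains (layer) u v i where "{u, v} \<in> E" "e = {(u, i), (v, i)}"
    | (rung) v where "v \<in> V" "e = {(v, False), (v, True)}"
  using assms(2) unfolding cart_prod_K2_E_iff[OF assms(1)] by blast

lemma finite_cart_prod_K2_E:
  assumes "simple_graph V E"
  shows "finite (cart_prod_E V E K2_V K2_E)"
proof -
  have "e \<subseteq> V \<times> UNIV" if "e \<in> cart_prod_E V E K2_V K2_E" for e
    using assms that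
  proof (cases rule: cart_prod_K2_E_cases)
    case (layer u v i)
    then show ?thesis using assms unfolding simple_graph_def by auto
  qed simp
  then have "cart_prod_E V E K2_V K2_E \<subseteq> Pow (V \<times> UNIV)" by blast
  moreover have "finite V" using assms unfolding simple_graph_def by simp
  ultimately show ?thesis by (simp add: finite_subset)
qed

lemma has_walk_refl: "has_walk E p p 0"
  unfolding has_walk_def by (rule exI[of _ "[p]"]) simp

lemma has_walk_edge: "{p, q} \<in> E \<Longrightarrow> has_walk E p q 1"
  unfolding has_walk_def by (rule exI[of _ "[p, q]"]) simp

lemma has_walk_two_edges: "{p, q} \<in> E \<Longrightarrow> {q, s} \<in> E \<Longrightarrow> has_walk E p s 2"
  unfolding has_walk_def
proof (rule exI[of _ "[p, q, s]"], intro conjI allI impI)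
  fix i :: nat assume "i < 2" "{p, q} \<in> E" "{q, s} \<in> E"
  then show "{[p, q, s] ! i, [p, q, s] ! Suc i} \<in> E"
    by (cases i) (auto simp: less_Suc_eq)
qed simp_all

lemma vdist_le_walk: "has_walk E p q n \<Longrightarrow> vdist E p q \<le> enat n"
  unfolding vdist_def by (auto intro: Least_le)

lemma edist_le_vdist:
  assumes "finite e" "finite f" "x \<in> e" "y \<in> f"
  shows "edist E e f \<le> vdist E x y"
proof -
  have eq: "{vdist E x y |x y. x \<in> e \<and> y \<in> f} = (\<lambda>(x, y). vdist E x y) ` (e \<times> f)" by auto
  have "finite ((\<lambda>(x, y). vdist E x y) ` (e \<times> f))" using assms(1,2) by simp
  moreover have "vdist E x y \<in> (\<lambda>(x, y). vdist E x y) ` (e \<times> f)" using assms(3,4) by force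
  ultimately show ?thesis unfolding edist_def eq by (rule Min_le)
qed

lemma cart_prod_K2_walk_le_2:
  assumes "simple_graph V E" "x \<in> V" "x = y \<or> {x, y} \<in> E"
  shows "\<exists>n\<le>2. has_walk (cart_prod_E V E K2_V K2_E) (x, i) (y, j) n"
proof -
  let ?H = "cart_prod_E V E K2_V K2_E"
  have rung: "{(x, i), (x, j)} \<in> ?H" if "i \<noteq> j"
  proof -
    have "{(x, i), (x, j)} = {(x, False), (x, True)}" using that by (cases i; cases j) auto
    then show ?thesis unfolding cart_prod_K2_E_iff[OF assms(1)] using assms(2) by blast
  qed
  have layer: "{(x, j), (y, j)} \<in> ?H" if "{x, y} \<in> E"
    unfolding cart_prod_K2_E_iff[OF assms(1)] using that by blast
  consider "x = y" "i = j" | "x = y" "i \<noteq> j" | "{x, y} \<in> E" "i = j" | "{x, y} \<in> E" "i \<noteq> j"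
    using assms(3) by blast
  then show ?thesis
  proof cases
    case 1
    then show ?thesis using has_walk_refl by (intro exI[of _ 0]) simp
  next
    case 2
    then show ?thesis using has_walk_edge[OF rung] by (intro exI[of _ 1]) simp
  next
    case 3
    then show ?thesis using has_walk_edge[OF layer] by (intro exI[of _ 1]) simp
  next
    case 4
    then show ?thesis using has_walk_two_edges[OF rung layer] by (intro exI[of _ 2]) simp
  qed
qed

definition far :: "'v set set \<Rightarrow> 'v set \<Rightarrow> 'v set \<Rightarrow> bool" where
  "far E X Y \<longleftrightarrow> (\<forall>x\<in>X. \<forall>y\<in>Y. x \<noteq> y \<and> {x, y} \<notin> E)"

lemma far_projections_of_edist:
  assumes G: "simple_graph V E"
    and ef: "e \<in> cart_prod_E V E K2_V K2_E" "f \<in> cart_prod_E V E K2_V K2_E"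
    and dist: "3 \<le> edist (cart_prod_E V E K2_V K2_E) e f"
  shows "far E (fst ` e) (fst ` f)"
  unfolding far_def
proof (intro ballI)
  let ?H = "cart_prod_E V E K2_V K2_E"
  have fin: "finite g" if "g \<in> ?H" for g
    using G that by (cases rule: cart_prod_K2_E_cases) auto
  have V: "x \<in> V" if "g \<in> ?H" "(x, i) \<in> g" for g x i
    using G that(1)
  proof (cases rule: cart_prod_K2_E_cases)
    case (layer u v i)
    then show ?thesis using G that(2) unfolding simple_graph_def by auto
  next
    case (rung v)
    then show ?thesis using that(2) by auto
  qed
  fix x y assume "x \<in> fst ` e" "y \<in> fst ` f"
  then obtain i j where xy: "(x, i) \<in> e" "(y, j) \<in> f" by force
  show "x \<noteq> y \<and> {x, y} \<notin> E"
  proof (rule ccontr)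
    assume "\<not> (x \<noteq> y \<and> {x, y} \<notin> E)"
    then obtain n where n: "n \<le> 2" "has_walk ?H (x, i) (y, j) n"
      using cart_prod_K2_walk_le_2[OF G V[OF ef(1) xy(1)]] by blast
    have "edist ?H e f \<le> vdist ?H (x, i) (y, j)"
      using edist_le_vdist[OF fin[OF ef(1)] fin[OF ef(2)] xy] .
    also have "\<dots> \<le> enat n" using vdist_le_walk[OF n(2)] .
    also have "\<dots> < 3" using n(1) by (simp add: numeral_eq_enat)
    finally show False using dist by simp
  qed
qed

lemma chromatic_index_eq_card_image:
  fixes c :: "'v set \<Rightarrow> 'c"
  assumes "finite E" "proper_edge_coloring E c"
    and min: "\<And>c' :: 'v set \<Rightarrow> nat. proper_edge_coloring E c' \<Longrightarrow> card (c ` E) \<le> card (c' ` E)"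
  shows "chromatic_index E = card (c ` E)"
  unfolding chromatic_index_def
proof (rule Least_equality)
  obtain \<beta> where \<beta>: "bij_betw \<beta> (c ` E) {0..<card (c ` E)}"
    using ex_bij_betw_finite_nat assms(1) by blast
  have "proper_edge_coloring E (\<beta> \<circ> c)"
    using assms(2) bij_betw_imp_inj_on[OF \<beta>]
    unfolding proper_edge_coloring_def inj_on_def by (metis comp_apply image_eqI)
  moreover have "(\<beta> \<circ> c) ` E \<subseteq> {..<card (c ` E)}"
    using bij_betw_imp_surj_on[OF \<beta>] by auto
  ultimately show "\<exists>c'::'v set \<Rightarrow> nat. proper_edge_coloring E c' \<and> c' ` E \<subseteq> {..<card (c ` E)}"
    by blast
next
  fix k assume "\<exists>c'::'v set \<Rightarrow> nat. proper_edge_coloring E c' \<and> c' ` E \<subseteq> {..<k}"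
  then obtain c' :: "'v set \<Rightarrow> nat" where "proper_edge_coloring E c'" "c' ` E \<subseteq> {..<k}" by blast
  then show "card (c ` E) \<le> k"
    using min card_mono[of "{..<k}" "c' ` E"] by fastforce
qed

lemma card_le_card_image_of_star:
  assumes "proper_edge_coloring E c" "finite E" "F \<subseteq> E" "\<forall>e\<in>F. x \<in> e"
  shows "card F \<le> card (c ` E)"
proof -
  have "inj_on c F"
    using assms(1,3,4) unfolding proper_edge_coloring_def inj_on_def by blast
  then have "card F = card (c ` F)" by (simp add: card_image)
  also have "\<dots> \<le> card (c ` E)" using assms(2,3) by (intro card_mono) auto
  finally show ?thesis .
qed

lemma cart_prod_K2_star:
  assumes G: "simple_graph V E" and v: "v \<in> V"
  obtains F where "F \<subseteq> cart_prod_E V E K2_V K2_E" "\<forall>e\<in>F. (v, False) \<in> e"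
    "card F = degree E v + 1"
proof
  let ?emb = "(`) (\<lambda>x. (x, False))"
  let ?F = "insert {(v, False), (v, True)} (?emb ` {g\<in>E. v \<in> g})"
  have "?emb g \<in> cart_prod_E V E K2_V K2_E" if g: "g \<in> E" for g
  proof -
    obtain a b where ab: "g = {a, b}" by (rule simple_graph_edgeE[OF G g])
    then have "{a, b} \<in> E \<and> ?emb g = {(a, False), (b, False)}" using g by simp
    then show ?thesis unfolding cart_prod_K2_E_iff[OF G] by blast
  qed
  moreover have "{(v, False), (v, True)} \<in> cart_prod_E V E K2_V K2_E"
    using cart_prod_K2_E_iff[OF G] v by blast
  ultimately show "?F \<subseteq> cart_prod_E V E K2_V K2_E" by blast
  show "\<forall>e\<in>?F. (v, False) \<in> e" by auto
  have "inj_on ?emb {g\<in>E. v \<in> g}"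
    by (rule inj_onI) (simp add: inj_image_eq_iff inj_on_def)
  moreover have "finite {g\<in>E. v \<in> g}" using simple_graph_finite_edges[OF G] by simp
  moreover have "{(v, False), (v, True)} \<notin> ?emb ` {g\<in>E. v \<in> g}" by auto
  ultimately show "card ?F = degree E v + 1"
    unfolding degree_def by (simp add: card_image)
qed

lemma card_image_cart_prod_K2_ge:
  assumes G: "simple_graph V E" "V \<noteq> {}"
    and c: "proper_edge_coloring (cart_prod_E V E K2_V K2_E) c"
  shows "max_degree V E + 1 \<le> card (c ` cart_prod_E V E K2_V K2_E)"
proof -
  obtain v where "v \<in> V" "degree E v = max_degree V E"
    using max_degree_attained[OF G] .
  moreover obtain F where "F \<subseteq> cart_prod_E V E K2_V K2_E" "\<forall>e\<in>F. (v, False) \<in> e"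
    "card F = degree E v + 1"
    using cart_prod_K2_star[OF G(1) \<open>v \<in> V\<close>] .
  ultimately show ?thesis
    using card_le_card_image_of_star[OF c finite_cart_prod_K2_E[OF G(1)]] by metis
qed

text \<open>A layer edge projects onto an edge of G, a rung onto a single vertex.\<close>

definition prism_coloring :: "('v set \<Rightarrow> 'c) \<Rightarrow> ('v \<Rightarrow> 'c) \<Rightarrow> ('v \<times> bool) set \<Rightarrow> 'c" where
  "prism_coloring \<delta> \<mu> e = (if card (fst ` e) = 2 then \<delta> (fst ` e) else \<mu> (the_elem (fst ` e)))"

lemma prism_coloring_layer:
  assumes "simple_graph V E" "{u, v} \<in> E"
  shows "prism_coloring \<delta> \<mu> {(u, i), (v, i)} = \<delta> {u, v}"
proof -
  have "u \<noteq> v" using assms unfolding simple_graph_def by fastforce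
  then show ?thesis by (simp add: prism_coloring_def)
qed

lemma prism_coloring_rung: "prism_coloring \<delta> \<mu> {(v, False), (v, True)} = \<mu> v"
  by (simp add: prism_coloring_def)

lemma prism_coloring_projection:
  assumes "simple_graph V E" "e \<in> cart_prod_E V E K2_V K2_E"
  shows "fst ` e \<in> E \<and> prism_coloring \<delta> \<mu> e = \<delta> (fst ` e) \<or>
    (\<exists>v. fst ` e = {v} \<and> prism_coloring \<delta> \<mu> e = \<mu> v)"
  using assms
proof (cases rule: cart_prod_K2_E_cases)
  case (layer u v i)
  then show ?thesis by (simp add: prism_coloring_layer[OF assms(1)])
next
  case (rung v)
  then show ?thesis by (simp add: prism_coloring_rung)
qed

lemma proper_prism_coloring:
  assumes G: "simple_graph V E" and \<delta>: "proper_edge_coloring E \<delta>"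
    and \<mu>: "\<forall>g\<in>E. \<forall>v\<in>g. \<delta> g \<noteq> \<mu> v"
  shows "proper_edge_coloring (cart_prod_E V E K2_V K2_E) (prism_coloring \<delta> \<mu>)"
  unfolding proper_edge_coloring_def
proof (intro ballI impI)
  note layer_color = prism_coloring_layer[OF G]
  fix e f assume e: "e \<in> cart_prod_E V E K2_V K2_E" and f: "f \<in> cart_prod_E V E K2_V K2_E"
    and ef: "e \<noteq> f \<and> e \<inter> f \<noteq> {}"
  from G e show "prism_coloring \<delta> \<mu> e \<noteq> prism_coloring \<delta> \<mu> f"
  proof (cases rule: cart_prod_K2_E_cases)
    case e_layer: (layer u v i)
    from G f show ?thesis
    proof (cases rule: cart_prod_K2_E_cases)
      case (layer u' v' i')
      then have "{u, v} \<noteq> {u', v'}" "{u, v} \<inter> {u', v'} \<noteq> {}"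
        using e_layer ef by auto
      then show ?thesis
        using \<delta> e_layer layer unfolding proper_edge_coloring_def by (simp add: layer_color)
    next
      case (rung w)
      then show ?thesis using e_layer ef \<mu> by (auto simp: layer_color prism_coloring_rung)
    qed
  next
    case e_rung: (rung w)
    from G f show ?thesis
    proof (cases rule: cart_prod_K2_E_cases)
      case (layer u v i)
      then show ?thesis using e_rung ef \<mu> by (auto simp: layer_color prism_coloring_rung)
    next
      case (rung w')
      then show ?thesis using e_rung ef by auto
    qed
  qed
qed

section \<open>Extending far precolourings\<close>

lemma far_family_meets_edge_once:
  assumes G: "simple_graph V E" and g: "g \<in> E"
    and far: "\<forall>X\<in>\<Pi>. \<forall>Y\<in>\<Pi>. X \<noteq> Y \<longrightarrow> far E X Y"
    and XY: "X \<in> \<Pi>" "Y \<in> \<Pi>" "X \<inter> g \<noteq> {}" "Y \<inter> g \<noteq> {}"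
  shows "X = Y"
proof (rule ccontr)
  assume "X \<noteq> Y"
  then have XY_far: "far E X Y" using far XY(1,2) by blast
  obtain x y where "x \<in> X" "y \<in> Y" "x \<in> g" "y \<in> g" using XY(3,4) by blast
  moreover obtain a b where "g = {a, b}" by (rule simple_graph_edgeE[OF G g])
  ultimately have "x = y \<or> {x, y} \<in> E" using g by (auto simp: insert_commute)
  then show False using XY_far \<open>x \<in> X\<close> \<open>y \<in> Y\<close> unfolding far_def by blast
qed

text \<open>In the next two lemmas \<Pi> stands for the projections to G of the precoloured edges of
  the prism and \<Phi> for their colours.\<close>

lemma far_precoloring_edge_extension:
  assumes G: "simple_graph V E" "bipartite V E" and deg: "\<forall>v. degree E v \<le> k"
    and S: "finite S" "k < card S"
    and far: "\<forall>X\<in>\<Pi>. \<forall>Y\<in>\<Pi>. X \<noteq> Y \<longrightarrow> far E X Y" and \<Phi>: "\<forall>X\<in>\<Pi>. \<Phi> X \<in> S"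
  obtains \<delta> where "proper_edge_coloring E \<delta>" "\<forall>g\<in>E. \<delta> g \<in> S" "\<forall>g\<in>E \<inter> \<Pi>. \<delta> g = \<Phi> g"
    "\<forall>X\<in>\<Pi>. \<forall>g\<in>E. X \<inter> g \<noteq> {} \<longrightarrow> X \<noteq> g \<longrightarrow> \<delta> g \<noteq> \<Phi> X"
proof -
  define Forb where "Forb g = \<Phi> ` {X\<in>\<Pi>. X \<inter> g \<noteq> {}}" for g
  define L where "L g = S - Forb g" for g
  have "finite (L g) \<and> k \<le> card (L g)" if g: "g \<in> E" for g
  proof -
    obtain a where "Forb g \<subseteq> {a}"
      using far_family_meets_edge_once[OF G(1) g far] unfolding Forb_def by blast
    then have "card (S - {a}) \<le> card (L g)" using S(1) unfolding L_def by (intro card_mono) auto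
    moreover have "card S - 1 \<le> card (S - {a})" by (simp add: card_Diff_singleton_if)
    ultimately show ?thesis using S unfolding L_def by simp
  qed
  then obtain \<delta>0 where \<delta>0: "\<forall>g\<in>E - \<Pi>. \<delta>0 g \<in> L g" "proper_edge_coloring (E - \<Pi>) \<delta>0"
    using bipartite_list_edge_coloring[OF G deg, of "E - \<Pi>" L] by blast
  define \<delta> where "\<delta> g = (if g \<in> \<Pi> then \<Phi> g else \<delta>0 g)" for g
  have avoid: "\<forall>X\<in>\<Pi>. \<forall>g\<in>E. X \<inter> g \<noteq> {} \<longrightarrow> X \<noteq> g \<longrightarrow> \<delta> g \<noteq> \<Phi> X"
  proof (intro ballI impI)
    fix X g assume X: "X \<in> \<Pi>" and g: "g \<in> E" and Xg: "X \<inter> g \<noteq> {}" "X \<noteq> g"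
    show "\<delta> g \<noteq> \<Phi> X"
    proof (cases "g \<in> \<Pi>")
      case True
      then show ?thesis using far X Xg unfolding far_def by blast
    next
      case False
      then have "\<delta> g \<in> S - Forb g" using \<delta>0(1) g unfolding \<delta>_def L_def by auto
      moreover have "\<Phi> X \<in> Forb g" using X Xg(1) unfolding Forb_def by blast
      ultimately show ?thesis by auto
    qed
  qed
  have "proper_edge_coloring E \<delta>"
    unfolding proper_edge_coloring_def
  proof (intro ballI impI)
    fix g h assume g: "g \<in> E" and h: "h \<in> E" and gh: "g \<noteq> h \<and> g \<inter> h \<noteq> {}"
    consider "g \<in> \<Pi>" | "h \<in> \<Pi>" | "g \<notin> \<Pi>" "h \<notin> \<Pi>" by blast
    then show "\<delta> g \<noteq> \<delta> h"
    proof cases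
      case 1
      then have "\<delta> g = \<Phi> g" unfolding \<delta>_def by simp
      moreover have "\<delta> h \<noteq> \<Phi> g" using avoid 1 h gh by blast
      ultimately show ?thesis by simp
    next
      case 2
      have "h \<inter> g \<noteq> {}" "h \<noteq> g" using gh by blast+
      then have "\<delta> g \<noteq> \<Phi> h" using avoid 2 g by blast
      moreover have "\<delta> h = \<Phi> h" using 2 unfolding \<delta>_def by simp
      ultimately show ?thesis by simp
    next
      case 3
      then show ?thesis using \<delta>0(2) g h gh unfolding \<delta>_def proper_edge_coloring_def by simp
    qed
  qed
  moreover have "\<forall>g\<in>E. \<delta> g \<in> S" using \<delta>0(1) \<Phi> unfolding \<delta>_def L_def by auto
  moreover have "\<forall>g\<in>E \<inter> \<Pi>. \<delta> g = \<Phi> g" unfolding \<delta>_def by simp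
  ultimately show thesis using that avoid by blast
qed

lemma far_precoloring_vertex_extension:
  assumes G: "simple_graph V E" and deg: "\<forall>v. degree E v \<le> k" and S: "k < card S"
    and \<Phi>: "\<forall>X\<in>\<Pi>. \<Phi> X \<in> S"
    and avoid: "\<forall>X\<in>\<Pi>. \<forall>g\<in>E. X \<inter> g \<noteq> {} \<longrightarrow> X \<noteq> g \<longrightarrow> \<delta> g \<noteq> \<Phi> X"
  obtains \<mu> where "\<forall>g\<in>E. \<forall>v\<in>g. \<delta> g \<noteq> \<mu> v" "\<forall>v. \<mu> v \<in> S" "\<forall>v. {v} \<in> \<Pi> \<longrightarrow> \<mu> v = \<Phi> {v}"
proof -
  have "\<forall>v. \<exists>a. a \<in> S \<and> (\<forall>g\<in>E. v \<in> g \<longrightarrow> \<delta> g \<noteq> a) \<and> ({v} \<in> \<Pi> \<longrightarrow> a = \<Phi> {v})"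
  proof
    fix v
    show "\<exists>a. a \<in> S \<and> (\<forall>g\<in>E. v \<in> g \<longrightarrow> \<delta> g \<noteq> a) \<and> ({v} \<in> \<Pi> \<longrightarrow> a = \<Phi> {v})"
    proof (cases "{v} \<in> \<Pi>")
      case True
      have "\<delta> g \<noteq> \<Phi> {v}" if "g \<in> E" "v \<in> g" for g
      proof -
        have "card g = 2" using G that(1) unfolding simple_graph_def by blast
        then have "{v} \<noteq> g" by auto
        then show ?thesis using avoid True that by blast
      qed
      then show ?thesis using True \<Phi> by blast
    next
      case False
      have fin: "finite {g\<in>E. v \<in> g}" using simple_graph_finite_edges[OF G] by simp
      have "card (\<delta> ` {g\<in>E. v \<in> g}) \<le> degree E v"
        unfolding degree_def using fin by (rule card_image_le)
      then have "card (\<delta> ` {g\<in>E. v \<in> g}) < card S" using deg S by (meson le_less_trans)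
      then obtain a where "a \<in> S" "a \<notin> \<delta> ` {g\<in>E. v \<in> g}"
        using ex_notin_of_card_less[OF finite_imageI[OF fin]] by blast
      then show ?thesis using False by blast
    qed
  qed
  then obtain \<mu> where "\<forall>v. \<mu> v \<in> S \<and> (\<forall>g\<in>E. v \<in> g \<longrightarrow> \<delta> g \<noteq> \<mu> v) \<and> ({v} \<in> \<Pi> \<longrightarrow> \<mu> v = \<Phi> {v})"
    by (rule choice[THEN exE])
  then show thesis by (intro that[of \<mu>]) blast+
qed

lemma prism_precoloring_extension:
  assumes G: "simple_graph V E" "bipartite V E" and deg: "\<forall>v. degree E v \<le> k"
    and S: "finite S" "k < card S"
    and E0: "E0 \<subseteq> cart_prod_E V E K2_V K2_E" and \<phi>0: "\<forall>e\<in>E0. \<phi>0 e \<in> S"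
    and dist: "\<forall>e\<in>E0. \<forall>f\<in>E0. e \<noteq> f \<longrightarrow> 3 \<le> edist (cart_prod_E V E K2_V K2_E) e f"
  obtains c where "proper_edge_coloring (cart_prod_E V E K2_V K2_E) c"
    "c ` cart_prod_E V E K2_V K2_E \<subseteq> S" "\<forall>e\<in>E0. c e = \<phi>0 e"
proof -
  let ?H = "cart_prod_E V E K2_V K2_E"
  let ?\<pi> = "\<lambda>e :: ('v \<times> bool) set. fst ` e"
  have far: "far E (?\<pi> e) (?\<pi> f)" if "e \<in> E0" "f \<in> E0" "e \<noteq> f" for e f
    using far_projections_of_edist[OF G(1)] E0 dist that by blast
  have "inj_on ?\<pi> E0"
  proof (rule inj_onI)
    fix e f assume ef: "e \<in> E0" "f \<in> E0" "?\<pi> e = ?\<pi> f"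
    have "e \<noteq> {}" using G(1) E0 ef(1) by (auto elim: cart_prod_K2_E_cases)
    then show "e = f" using far[OF ef(1,2)] ef(3) unfolding far_def by blast
  qed
  define \<Phi> where "\<Phi> X = \<phi>0 (the_inv_into E0 ?\<pi> X)" for X
  have \<Phi>_proj: "\<Phi> (?\<pi> e) = \<phi>0 e" if "e \<in> E0" for e
    unfolding \<Phi>_def using the_inv_into_f_f[OF \<open>inj_on ?\<pi> E0\<close> that] by simp
  have far_\<Pi>: "\<forall>X\<in>?\<pi> ` E0. \<forall>Y\<in>?\<pi> ` E0. X \<noteq> Y \<longrightarrow> far E X Y" using far by blast
  have \<Phi>_S: "\<forall>X\<in>?\<pi> ` E0. \<Phi> X \<in> S" using \<Phi>_proj \<phi>0 by auto
  obtain \<delta> where \<delta>: "proper_edge_coloring E \<delta>" "\<forall>g\<in>E. \<delta> g \<in> S"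
    "\<forall>g\<in>E \<inter> ?\<pi> ` E0. \<delta> g = \<Phi> g"
    "\<forall>X\<in>?\<pi> ` E0. \<forall>g\<in>E. X \<inter> g \<noteq> {} \<longrightarrow> X \<noteq> g \<longrightarrow> \<delta> g \<noteq> \<Phi> X"
    using far_precoloring_edge_extension[OF G deg S far_\<Pi> \<Phi>_S] .
  obtain \<mu> where \<mu>: "\<forall>g\<in>E. \<forall>v\<in>g. \<delta> g \<noteq> \<mu> v" "\<forall>v. \<mu> v \<in> S"
    "\<forall>v. {v} \<in> ?\<pi> ` E0 \<longrightarrow> \<mu> v = \<Phi> {v}"
    using far_precoloring_vertex_extension[OF G(1) deg S(2) \<Phi>_S \<delta>(4)] .
  show thesis
  proof (rule that[of "prism_coloring \<delta> \<mu>"])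
    show "proper_edge_coloring ?H (prism_coloring \<delta> \<mu>)"
      using proper_prism_coloring[OF G(1) \<delta>(1) \<mu>(1)] .
    show "prism_coloring \<delta> \<mu> ` ?H \<subseteq> S"
    proof (rule image_subsetI)
      fix e assume "e \<in> ?H"
      then show "prism_coloring \<delta> \<mu> e \<in> S"
        using prism_coloring_projection[OF G(1), of e \<delta> \<mu>] \<delta>(2) \<mu>(2) by auto
    qed
    show "\<forall>e\<in>E0. prism_coloring \<delta> \<mu> e = \<phi>0 e"
    proof
      fix e assume e: "e \<in> E0"
      have \<pi>_e: "?\<pi> e \<in> ?\<pi> ` E0" using e by blast
      from prism_coloring_projection[OF G(1) subsetD[OF E0 e], of \<delta> \<mu>]
      show "prism_coloring \<delta> \<mu> e = \<phi>0 e"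
      proof
        assume "?\<pi> e \<in> E \<and> prism_coloring \<delta> \<mu> e = \<delta> (?\<pi> e)"
        then show ?thesis using \<delta>(3) \<pi>_e \<Phi>_proj[OF e] by auto
      next
        assume "\<exists>v. ?\<pi> e = {v} \<and> prism_coloring \<delta> \<mu> e = \<mu> v"
        then show ?thesis using \<mu>(3) \<pi>_e \<Phi>_proj[OF e] by auto
      qed
    qed
  qed
qed

theorem theorem3:
  fixes V :: "'v set" and E :: "'v set set"
    and E0 :: "('v \<times> bool) set set" and \<phi>0 :: "('v \<times> bool) set \<Rightarrow> nat"
    and C :: "nat set"
  assumes "simple_graph V E"
    and "bipartite V E"
    and "E0 \<subseteq> cart_prod_E V E K2_V K2_E"
    and "\<forall>e\<in>E0. \<phi>0 e \<in> C"
    and "finite C" and "card C \<le> max_degree V E + 1"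
    and "\<forall>e\<in>E0. \<forall>f\<in>E0. e \<noteq> f \<longrightarrow> edist (cart_prod_E V E K2_V K2_E) e f \<ge> 3"
  shows "\<exists>c :: ('v \<times> bool) set \<Rightarrow> nat.
           proper_edge_coloring (cart_prod_E V E K2_V K2_E) c \<and>
           card (c ` cart_prod_E V E K2_V K2_E) = chromatic_index (cart_prod_E V E K2_V K2_E) \<and>
           (\<forall>e\<in>E0. c e = \<phi>0 e)"
proof -
  let ?H = "cart_prod_E V E K2_V K2_E"
  obtain S where S: "C \<subseteq> S" "finite S" "card S = max_degree V E + 1"
    using finite_superset_with_card[OF assms(5,6) infinite_UNIV_nat] by blast
  have deg: "\<forall>v. degree E v \<le> max_degree V E" using degree_le_max_degree[OF assms(1)] by blast
  have "max_degree V E < card S" using S(3) by simp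
  moreover have "\<forall>e\<in>E0. \<phi>0 e \<in> S" using assms(4) S(1) by blast
  ultimately obtain c :: "('v \<times> bool) set \<Rightarrow> nat" where c: "proper_edge_coloring ?H c"
    "c ` ?H \<subseteq> S" "\<forall>e\<in>E0. c e = \<phi>0 e"
    using prism_precoloring_extension[OF assms(1,2) deg S(2) _ assms(3) _ assms(7)] by blast
  have "card (c ` ?H) \<le> card (c' ` ?H)" if "proper_edge_coloring ?H c'" for c' :: "_ \<Rightarrow> nat"
  proof (cases "V = {}")
    case True
    then show ?thesis by (simp add: cart_prod_E_def)
  next
    case False
    have "card (c ` ?H) \<le> card S" using c(2) S(2) by (rule card_mono[rotated])
    then show ?thesis using card_image_cart_prod_K2_ge[OF assms(1) False that] S(3) by simp
  qed
  then have "chromatic_index ?H = card (c ` ?H)"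
    using chromatic_index_eq_card_image[OF finite_cart_prod_K2_E[OF assms(1)] c(1)] by blast
  then show ?thesis using c(1,3) by auto
qed

end
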